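(* Let $1\le k\le N$ be integers. Let $\psi^j_s,\psi^{\bar j}_{\bar s}$ ($s=1,\dots,N-k$, $j=1,\dots,k$) be $2k(N-k)$ anticommuting (Grassmann) generators, i.e. each pair of them anticommutes and each squares to zero. Let $\Phi$ be the $k\times k$ matrix with entries $\Phi_{ij}=\sum_{s=1}^{N-k}\psi^i_s\psi^{\bar j}_{\bar s}$. Let $\int D\psi$ denote the Berezin integral, the linear functional on the Grassmann algebra which vanishes on all monomials not of top degree and satisfies $$\int D\psi \prod_{s=1}^{N-k} \psi_s^{1} \psi_{\bar s}^{\bar1} \cdots \psi_s^{k} \psi_{\bar s}^{\bar k}=1.$$ For $m=1,2$ with $kN-k^2-2m\ge 0$ define $$P_m:=\int D\psi \,\bigl( \mathrm{tr}( \Phi )\bigr)^{kN-k^2-2m} \bigl(\mathrm{tr}( \Phi^2 )\bigr)^m.$$ Then \begin{align*} P_1&=(kN-k^2-2)!\,k(N-k)(N-2k) \quad(\text{if } kN-k^2-2\ge0),\\ P_2&=(kN-k^2-4)!\,k(N-k)\Bigl [k(N-k)^3-2(N-k)^2(k^2+2) +(N-k)(k^3+10k)-4k^2-2\Bigr]\quad(\text{if } kN-k^2-4\ge0). \end{align*}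
   Context: The entries of $\Phi$ are even elements of the Grassmann algebra, so they commute with each other and $\mathrm{tr}(\Phi)$, $\mathrm{tr}(\Phi^2)$ and their powers are well defined. *)

theory Defs
  imports Complex_Main "HOL-Library.Product_Lexorder"
begin

text \<open>An element is represented by its coefficient function on
sets of generators: x S is the coefficient of the ordered monomial
g1 g2 ... gr, where S = {g1 < g2 < ... < gr}. (Only finite S carry non-zero
coefficients for the elements built below.)\<close>

type_synonym 'g grass = "'g set \<Rightarrow> real"

definition inv_count :: "'g::linorder set \<Rightarrow> 'g set \<Rightarrow> nat" where
  "inv_count A B = card {(x, y). x \<in> A \<and> y \<in> B \<and> y < x}"

text \<open>Product: (ordered monomial of A) times (ordered monomial of B) equals
(-1)^(number of inversions) times the ordered monomial of A \<union> B when A, B are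
disjoint, and 0 otherwise.\<close>
definition gmul :: "'g::linorder grass \<Rightarrow> 'g grass \<Rightarrow> 'g grass" where
  "gmul a b = (\<lambda>S. \<Sum>T\<in>Pow S. (-1) ^ inv_count T (S - T) * a T * b (S - T))"

definition gone :: "'g grass" where
  "gone = (\<lambda>S. if S = {} then 1 else 0)"

definition ggen :: "'g \<Rightarrow> 'g grass" where
  "ggen g = (\<lambda>S. if S = {g} then 1 else 0)"

definition gsum :: "('i \<Rightarrow> 'g grass) \<Rightarrow> 'i set \<Rightarrow> 'g grass" where
  "gsum f A = (\<lambda>S. \<Sum>x\<in>A. f x S)"

primrec gpow :: "'g::linorder grass \<Rightarrow> nat \<Rightarrow> 'g grass" where
  "gpow a 0 = gone"
| "gpow a (Suc n) = gmul a (gpow a n)"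

definition gprod_list :: "'g::linorder grass list \<Rightarrow> 'g grass" where
  "gprod_list xs = foldr gmul xs gone"

type_synonym gen = "bool \<times> nat \<times> nat"

definition psi :: "nat \<Rightarrow> nat \<Rightarrow> gen grass" where
  "psi j s = ggen (False, j, s)"

definition psibar :: "nat \<Rightarrow> nat \<Rightarrow> gen grass" where
  "psibar j s = ggen (True, j, s)"

definition Phi :: "nat \<Rightarrow> nat \<Rightarrow> nat \<Rightarrow> nat \<Rightarrow> gen grass" where
  "Phi N k i j = gsum (\<lambda>s. gmul (psi i s) (psibar j s)) {1..N-k}"

definition trPhi :: "nat \<Rightarrow> nat \<Rightarrow> gen grass" where
  "trPhi N k = gsum (\<lambda>i. Phi N k i i) {1..k}"

definition trPhi2 :: "nat \<Rightarrow> nat \<Rightarrow> gen grass" where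
  "trPhi2 N k = gsum (\<lambda>(i, j). gmul (Phi N k i j) (Phi N k j i)) ({1..k} \<times> {1..k})"

definition top_set :: "nat \<Rightarrow> nat \<Rightarrow> gen set" where
  "top_set N k = {(b, j, s). j \<in> {1..k} \<and> s \<in> {1..N-k}}"

definition top_monomial :: "nat \<Rightarrow> nat \<Rightarrow> gen grass" where
  "top_monomial N k = gprod_list
     (concat (map (\<lambda>s. concat (map (\<lambda>j. [psi j s, psibar j s]) [1..<k+1])) [1..<N-k+1]))"

text \<open>Berezin integral: the linear functional vanishing on all monomials not of top
degree, normalised so that it equals 1 on top_monomial.\<close>
definition berezin :: "nat \<Rightarrow> nat \<Rightarrow> gen grass \<Rightarrow> real" where
  "berezin N k x = x (top_set N k) / top_monomial N k (top_set N k)"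

definition P :: "nat \<Rightarrow> nat \<Rightarrow> nat \<Rightarrow> real" where
  "P N k m = berezin N k
     (gmul (gpow (trPhi N k) (k * N - k\<^sup>2 - 2 * m)) (gpow (trPhi2 N k) m))"

end

theory Submission
  imports Defs
begin

(* For a cell c = (j, s) of the k \<times> (N - k) grid let x_c = psi j s * psibar j s, so that
  tr \<Phi> = \<Sum>_c x_c with commuting, nilpotent x_c.  Integrating (tr \<Phi>)^r against a monomial peels off
  one x_c at a time: the result is r! if the monomial is a product of distinct x_c covering all but
  r cells, and 0 if some cell carries psi without psibar or vice versa.
  tr \<Phi>^2 is the sum over pairs of cells c = (i, s), d = (j, t) of
  T(c, d) = psi i s * psibar j s * psi j t * psibar i t, which is x_c x_d if c and d share a row,
  -x_c x_d if they share a column, and unbalanced otherwise.  This gives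
  P_1 = r! \<Sum>_{c,d} ([same row] - [same column]).  In a product T(c1, c2) T(c3, c4) two unbalanced
  factors can also compensate each other, exactly when c1, c2 are opposite corners of a rectangle
  and c3, c4 the other two; P_2 follows by counting these configurations. *)

section \<open>Grassmann algebra\<close>

lemma inv_count_swap:
  fixes G H :: "'g::linorder set"
  assumes "finite G" "finite H" "G \<inter> H = {}"
  shows "inv_count G H + inv_count H G = card G * card H"
proof -
  let ?A = "{(x, y). x \<in> G \<and> y \<in> H \<and> y < x}"
  let ?B = "{(x, y). x \<in> G \<and> y \<in> H \<and> x < y}"
  have cover: "?A \<union> ?B = G \<times> H" "?A \<inter> ?B = {}"
    using assms(3) by (auto simp: neq_iff)
  have "finite ?A" "finite ?B"
    using assms(1,2) by (auto intro: finite_subset[of _ "G \<times> H"])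
  then have "card ?A + card ?B = card G * card H"
    using card_Un_disjoint[of ?A ?B] cover by (simp add: card_cartesian_product)
  moreover have "card ?B = inv_count H G"
  proof -
    have "?B = prod.swap ` {(x, y). x \<in> H \<and> y \<in> G \<and> y < x}"
      by auto
    then show ?thesis
      unfolding inv_count_def by (simp add: card_image)
  qed
  ultimately show ?thesis
    unfolding inv_count_def by simp
qed

lemma inv_count_Un_left:
  fixes A B C :: "'g::linorder set"
  assumes "finite A" "finite B" "finite C" "A \<inter> B = {}"
  shows "inv_count (A \<union> B) C = inv_count A C + inv_count B C"
proof -
  have split: "{(x, y). x \<in> A \<union> B \<and> y \<in> C \<and> y < x} =
      {(x, y). x \<in> A \<and> y \<in> C \<and> y < x} \<union> {(x, y). x \<in> B \<and> y \<in> C \<and> y < x}"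
    by auto
  have fin: "finite {(x, y). x \<in> X \<and> y \<in> C \<and> y < x}" if "finite X" for X :: "'g set"
    by (rule finite_subset[of _ "X \<times> C"]) (use that assms(3) in auto)
  show ?thesis
    unfolding inv_count_def split by (rule card_Un_disjoint) (use assms fin in auto)
qed

lemma inv_count_Un_right:
  fixes A B C :: "'g::linorder set"
  assumes "finite A" "finite B" "finite C" "B \<inter> C = {}"
  shows "inv_count A (B \<union> C) = inv_count A B + inv_count A C"
proof -
  have split: "{(x, y). x \<in> A \<and> y \<in> B \<union> C \<and> y < x} =
      {(x, y). x \<in> A \<and> y \<in> B \<and> y < x} \<union> {(x, y). x \<in> A \<and> y \<in> C \<and> y < x}"
    by auto
  have fin: "finite {(x, y). x \<in> A \<and> y \<in> X \<and> y < x}" if "finite X" for X :: "'g set"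
    by (rule finite_subset[of _ "A \<times> X"]) (use that assms(1) in auto)
  show ?thesis
    unfolding inv_count_def split by (rule card_Un_disjoint) (use assms fin in auto)
qed

lemma inv_count_empty [simp]: "inv_count {} B = 0" "inv_count A {} = 0"
  unfolding inv_count_def by simp_all

lemma inv_count_sign_assoc:
  fixes U V W :: "'g::linorder set"
  assumes "finite U" "finite V" "finite W" "U \<inter> V = {}" "V \<inter> W = {}"
  shows "(-1::real) ^ inv_count (U \<union> V) W * (-1) ^ inv_count U V =
    (-1) ^ inv_count U (V \<union> W) * (-1) ^ inv_count V W"
proof -
  have "inv_count (U \<union> V) W + inv_count U V = inv_count U (V \<union> W) + inv_count V W"
    using assms by (simp add: inv_count_Un_left inv_count_Un_right)
  then show ?thesis
    by (metis power_add)
qed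

lemma sum_Pow_Pow_reindex:
  assumes "finite S"
  shows "(\<Sum>T\<in>Pow S. \<Sum>U\<in>Pow T. f T U) = (\<Sum>U\<in>Pow S. \<Sum>V\<in>Pow (S - U). f (U \<union> V) U)"
proof -
  have "(\<Sum>T\<in>Pow S. \<Sum>U\<in>Pow T. f T U) = (\<Sum>T\<in>Pow S. \<Sum>U\<in>{U \<in> Pow S. U \<subseteq> T}. f T U)"
    by (rule sum.cong[OF refl], rule sum.cong) auto
  also have "\<dots> = (\<Sum>U\<in>Pow S. \<Sum>T\<in>{T \<in> Pow S. U \<subseteq> T}. f T U)"
    using assms by (intro sum.swap_restrict) auto
  also have "\<dots> = (\<Sum>U\<in>Pow S. \<Sum>V\<in>Pow (S - U). f (U \<union> V) U)"
  proof (rule sum.cong[OF refl])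
    fix U assume "U \<in> Pow S"
    have "T \<in> (\<lambda>V. U \<union> V) ` Pow (S - U)" if "T \<in> Pow S" "U \<subseteq> T" for T
      using that by (intro image_eqI[of _ _ "T - U"]) auto
    with \<open>U \<in> Pow S\<close> have "{T \<in> Pow S. U \<subseteq> T} = (\<lambda>V. U \<union> V) ` Pow (S - U)"
      by auto
    moreover have "inj_on (\<lambda>V. U \<union> V) (Pow (S - U))"
      by (auto simp: inj_on_def)
    ultimately show "(\<Sum>T\<in>{T \<in> Pow S. U \<subseteq> T}. f T U) = (\<Sum>V\<in>Pow (S - U). f (U \<union> V) U)"
      by (simp add: sum.reindex)
  qed
  finally show ?thesis .
qed

lemma gmul_infinite: "infinite S \<Longrightarrow> gmul a b S = 0"
  unfolding gmul_def by simp

lemma gmul_assoc: "gmul (gmul a b) c = gmul a (gmul b c)"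
proof
  fix S
  show "gmul (gmul a b) c S = gmul a (gmul b c) S"
  proof (cases "finite S")
    case False
    then show ?thesis by (simp add: gmul_infinite)
  next
    case True
    have "gmul (gmul a b) c S = (\<Sum>T\<in>Pow S. \<Sum>U\<in>Pow T. (-1) ^ inv_count T (S - T) *
        (-1) ^ inv_count U (T - U) * a U * b (T - U) * c (S - T))"
      unfolding gmul_def by (simp add: sum_distrib_left sum_distrib_right mult.assoc)
    also have "\<dots> = gmul a (gmul b c) S"
      unfolding sum_Pow_Pow_reindex[OF True] gmul_def sum_distrib_left
    proof (rule sum.cong[OF refl], rule sum.cong[OF refl])
      fix U V assume "U \<in> Pow S" "V \<in> Pow (S - U)"
      then have UV: "U \<union> V - U = V" "S - (U \<union> V) = S - U - V" "V \<union> (S - U - V) = S - U"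
        and "U \<inter> V = {}" "V \<inter> (S - U - V) = {}"
        and "finite U" "finite V" "finite (S - U - V)"
        using True by (auto intro: rev_finite_subset[of S])
      then have "(-1::real) ^ inv_count (U \<union> V) (S - U - V) * (-1) ^ inv_count U V =
          (-1) ^ inv_count U (S - U) * (-1) ^ inv_count V (S - U - V)"
        using inv_count_sign_assoc[of U V "S - U - V"] by simp
      then show "(-1) ^ inv_count (U \<union> V) (S - (U \<union> V)) * (-1) ^ inv_count U (U \<union> V - U) *
          a U * b (U \<union> V - U) * c (S - (U \<union> V)) =
          (-1) ^ inv_count U (S - U) * a U * ((-1) ^ inv_count V (S - U - V) * b V * c (S - U - V))"
        unfolding UV(1,2) by (simp add: mult_ac)
    qed
    finally show ?thesis .
  qed
qed

abbreviation gzero :: "'g grass" where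
  "gzero \<equiv> (\<lambda>S. 0)"

definition gscale :: "real \<Rightarrow> 'g grass \<Rightarrow> 'g grass" where
  "gscale c a = (\<lambda>S. c * a S)"

definition is_monomial :: "'g grass \<Rightarrow> 'g set \<Rightarrow> bool" where
  "is_monomial a G \<longleftrightarrow> (\<forall>S. S \<noteq> G \<longrightarrow> a S = 0)"

text \<open>Since \<open>gmul\<close> vanishes on infinite sets, \<open>gone\<close> is a unit only for elements without
  coefficients there.\<close>
definition finitary :: "'g grass \<Rightarrow> bool" where
  "finitary a \<longleftrightarrow> (\<forall>S. infinite S \<longrightarrow> a S = 0)"

lemma finitary_gmul: "finitary (gmul a b)"
  unfolding finitary_def by (simp add: gmul_infinite)

lemma finitary_gsum: "(\<And>x. x \<in> A \<Longrightarrow> finitary (f x)) \<Longrightarrow> finitary (gsum f A)"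
  unfolding finitary_def gsum_def by simp

lemma finitary_if_monomial: "is_monomial a G \<Longrightarrow> finite G \<Longrightarrow> finitary a"
  unfolding is_monomial_def finitary_def by auto

lemma gmul_gone_left: "finitary a \<Longrightarrow> gmul gone a = a"
proof
  fix S assume "finitary a"
  show "gmul gone a S = a S"
  proof (cases "finite S")
    case True
    have "gmul gone a S = (\<Sum>T\<in>Pow S. if T = {} then a S else 0)"
      unfolding gmul_def gone_def by (rule sum.cong) auto
    with True show ?thesis by simp
  next
    case False
    with \<open>finitary a\<close> show ?thesis by (simp add: gmul_infinite finitary_def)
  qed
qed

lemma gmul_gone_right: "finitary a \<Longrightarrow> gmul a gone = a"
proof
  fix S assume "finitary a"
  show "gmul a gone S = a S"
  proof (cases "finite S")
    case True
    have "gmul a gone S = (\<Sum>T\<in>Pow S. if T = S then a S else 0)"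
      unfolding gmul_def gone_def by (rule sum.cong) auto
    with True show ?thesis by simp
  next
    case False
    with \<open>finitary a\<close> show ?thesis by (simp add: gmul_infinite finitary_def)
  qed
qed

lemma gmul_gsum_left: "gmul (gsum f A) b = gsum (\<lambda>x. gmul (f x) b) A"
  unfolding gmul_def gsum_def
  by (rule ext) (simp add: sum_distrib_left sum_distrib_right mult_ac sum.swap[of _ "Pow _"])

lemma gmul_gsum_right: "gmul a (gsum f A) = gsum (\<lambda>x. gmul a (f x)) A"
  unfolding gmul_def gsum_def
  by (rule ext) (simp add: sum_distrib_left sum_distrib_right mult_ac sum.swap[of _ "Pow _"])

lemma gmul_gscale_left: "gmul (gscale c a) b = gscale c (gmul a b)"
  unfolding gmul_def gscale_def by (rule ext) (simp add: sum_distrib_left mult_ac)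

lemma gmul_gscale_right: "gmul a (gscale c b) = gscale c (gmul a b)"
  unfolding gmul_def gscale_def by (rule ext) (simp add: sum_distrib_left mult_ac)

lemma gmul_zero_left [simp]: "gmul gzero b = gzero"
  unfolding gmul_def by simp

lemma gmul_zero_right [simp]: "gmul a gzero = gzero"
  unfolding gmul_def by simp

lemma gscale_gscale [simp]: "gscale c (gscale d a) = gscale (c * d) a"
  unfolding gscale_def by (simp add: mult.assoc)

lemma gscale_1 [simp]: "gscale 1 a = a"
  unfolding gscale_def by simp

lemma gscale_zero [simp]: "gscale c gzero = gzero"
  unfolding gscale_def by simp

lemma gscale_0 [simp]: "gscale 0 a = gzero"
  unfolding gscale_def by simp

lemma gmul_monomials:
  assumes "is_monomial a G" "is_monomial b H" "finite G" "finite H"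
  shows "gmul a b =
    (\<lambda>S. if G \<inter> H = {} \<and> S = G \<union> H then (-1) ^ inv_count G H * a G * b H else 0)"
proof
  fix S
  have "gmul a b S = (\<Sum>T\<in>Pow S. if T = G \<and> S - T = H then (-1) ^ inv_count G H * a G * b H else 0)"
    unfolding gmul_def using assms(1,2) by (intro sum.cong) (auto simp: is_monomial_def)
  also have "\<dots> = (if G \<inter> H = {} \<and> S = G \<union> H then (-1) ^ inv_count G H * a G * b H else 0)"
  proof (cases "G \<inter> H = {} \<and> S = G \<union> H")
    case True
    then have "(\<Sum>T\<in>Pow S. if T = G \<and> S - T = H then (-1) ^ inv_count G H * a G * b H else 0)
        = (\<Sum>T\<in>Pow S. if T = G then (-1) ^ inv_count G H * a G * b H else 0)"
      by (intro sum.cong) auto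
    with True assms(3,4) show ?thesis by simp
  next
    case False
    then show ?thesis
      unfolding if_not_P[OF False] by (intro sum.neutral) auto
  qed
  finally show "gmul a b S = \<dots>" .
qed

lemma is_monomial_gmul:
  "is_monomial a G \<Longrightarrow> is_monomial b H \<Longrightarrow> finite G \<Longrightarrow> finite H \<Longrightarrow>
    is_monomial (gmul a b) (G \<union> H)"
  unfolding is_monomial_def[of "gmul a b"] by (simp add: gmul_monomials)

lemma gmul_monomials_overlap:
  "is_monomial a G \<Longrightarrow> is_monomial b H \<Longrightarrow> finite G \<Longrightarrow> finite H \<Longrightarrow> G \<inter> H \<noteq> {} \<Longrightarrow>
    gmul a b = gzero"
  by (simp add: gmul_monomials)

lemma gmul_monomials_coeff:
  "is_monomial a G \<Longrightarrow> is_monomial b H \<Longrightarrow> finite G \<Longrightarrow> finite H \<Longrightarrow> G \<inter> H = {} \<Longrightarrow>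
    gmul a b (G \<union> H) = (-1) ^ inv_count G H * a G * b H"
  by (simp add: gmul_monomials)

lemma gmul_commute_monomials:
  assumes "is_monomial a G" "is_monomial b H" "finite G" "finite H"
  shows "gmul a b = gscale ((-1) ^ (card G * card H)) (gmul b a)"
proof (cases "G \<inter> H = {}")
  case True
  have "inv_count G H + 2 * inv_count H G = card G * card H + inv_count H G"
    using inv_count_swap[OF assms(3,4) True] by simp
  then have "(-1::real) ^ inv_count G H = (-1) ^ (card G * card H) * (-1) ^ inv_count H G"
    by (metis power_add power_minus1_even power_mult mult_1_right)
  then show ?thesis
    unfolding gmul_monomials[OF assms] gmul_monomials[OF assms(2,1,4,3)] gscale_def
    using True by (auto simp: Int_commute Un_commute mult_ac)
next
  case False
  then show ?thesis
    using gmul_monomials_overlap[OF assms] gmul_monomials_overlap[OF assms(2,1,4,3)]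
    by (simp add: Int_commute)
qed

lemma gpow_commute: "finitary a \<Longrightarrow> gmul a (gpow a r) = gmul (gpow a r) a"
proof (induction r)
  case 0
  then show ?case by (simp add: gmul_gone_left gmul_gone_right)
next
  case (Suc r)
  have "gmul (gpow a (Suc r)) a = gmul a (gmul (gpow a r) a)"
    by (simp add: gmul_assoc)
  with Suc show ?case by simp
qed

lemma is_monomial_ggen: "is_monomial (ggen g) {g}"
  unfolding is_monomial_def ggen_def by auto

lemma is_monomial_gone: "is_monomial gone {}"
  unfolding is_monomial_def gone_def by auto

lemma is_monomial_gscale: "is_monomial a G \<Longrightarrow> is_monomial (gscale c a) G"
  unfolding is_monomial_def gscale_def by auto

lemma ggen_anticommute: "g \<noteq> h \<Longrightarrow> gmul (ggen g) (ggen h) = gscale (-1) (gmul (ggen h) (ggen g))"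
  using gmul_commute_monomials[OF is_monomial_ggen is_monomial_ggen, of g h] by simp

section \<open>Cell monomials and the Berezin integral\<close>

definition phi_term :: "nat \<Rightarrow> nat \<Rightarrow> nat \<Rightarrow> gen grass" where
  "phi_term i j s = gmul (psi i s) (psibar j s)"

definition cell_term :: "nat \<times> nat \<Rightarrow> gen grass" where
  "cell_term c = phi_term (fst c) (fst c) (snd c)"

definition cell_monomial :: "(nat \<times> nat) set \<Rightarrow> gen grass" where
  "cell_monomial A = Finite_Set.fold (\<lambda>c. gmul (cell_term c)) gone A"

definition cells :: "nat \<Rightarrow> nat \<Rightarrow> (nat \<times> nat) set" where
  "cells N k = {1..k} \<times> {1..N-k}"

lemma is_monomial_psi: "is_monomial (psi i s) {(False, i, s)}"
  unfolding psi_def by (rule is_monomial_ggen)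

lemma is_monomial_psibar: "is_monomial (psibar i s) {(True, i, s)}"
  unfolding psibar_def by (rule is_monomial_ggen)

lemma is_monomial_phi_term: "is_monomial (phi_term i j s) {(False, i, s), (True, j, s)}"
  using is_monomial_gmul[OF is_monomial_psi is_monomial_psibar]
  unfolding phi_term_def by (simp add: insert_commute)

lemma phi_term_coeff: "phi_term i j s {(False, i, s), (True, j, s)} = 1"
proof -
  have "inv_count {(False, i, s)} {(True, j, s)} = 0"
    unfolding inv_count_def by (simp add: card_eq_0_iff less_prod_def)
  then show ?thesis
    using gmul_monomials_coeff[OF is_monomial_psi is_monomial_psibar, of i s j s]
    unfolding phi_term_def psi_def psibar_def by (simp add: insert_commute ggen_def)
qed

lemma phi_term_commute: "gmul (phi_term i j s) (phi_term i' j' s') = gmul (phi_term i' j' s') (phi_term i j s)"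
  using gmul_commute_monomials[OF is_monomial_phi_term is_monomial_phi_term] by simp

lemma cell_generators: "UNIV \<times> {c} = {(False, fst c, snd c), (True, fst c, snd c)}"
  by (cases c) (auto simp: UNIV_bool)

lemma is_monomial_cell_term: "is_monomial (cell_term c) (UNIV \<times> {c})"
  unfolding cell_term_def cell_generators by (rule is_monomial_phi_term)

lemma cell_term_coeff: "cell_term c (UNIV \<times> {c}) = 1"
  unfolding cell_term_def cell_generators by (rule phi_term_coeff)

lemma cell_term_commute: "gmul (cell_term c) (cell_term d) = gmul (cell_term d) (cell_term c)"
  using gmul_commute_monomials[OF is_monomial_cell_term is_monomial_cell_term]
  by (simp add: card_cartesian_product)

lemma cell_term_square: "gmul (cell_term c) (cell_term c) = gzero"
  by (rule gmul_monomials_overlap[OF is_monomial_cell_term is_monomial_cell_term]) auto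

interpretation cell_product: comp_fun_commute "\<lambda>c. gmul (cell_term c)"
proof
  fix c d :: "nat \<times> nat"
  show "gmul (cell_term d) \<circ> gmul (cell_term c) = gmul (cell_term c) \<circ> gmul (cell_term d)"
    by (auto simp: gmul_assoc[symmetric] cell_term_commute)
qed

lemma cell_monomial_empty [simp]: "cell_monomial {} = gone"
  unfolding cell_monomial_def by simp

lemma cell_monomial_insert:
  "finite A \<Longrightarrow> c \<notin> A \<Longrightarrow> cell_monomial (insert c A) = gmul (cell_term c) (cell_monomial A)"
  unfolding cell_monomial_def by simp

lemma is_monomial_cell_monomial: "finite A \<Longrightarrow> is_monomial (cell_monomial A) (UNIV \<times> A)"
proof (induction A rule: finite_induct)
  case empty
  then show ?case using is_monomial_gone by simp
next
  case (insert c A)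
  have "is_monomial (gmul (cell_term c) (cell_monomial A)) ((UNIV \<times> {c}) \<union> (UNIV \<times> A))"
    using insert by (intro is_monomial_gmul is_monomial_cell_term) simp_all
  moreover have "(UNIV :: bool set) \<times> insert c A = (UNIV \<times> {c}) \<union> (UNIV \<times> A)"
    by auto
  ultimately show ?case
    using insert by (simp add: cell_monomial_insert)
qed

lemma cell_monomial_coeff_nonzero: "finite A \<Longrightarrow> cell_monomial A (UNIV \<times> A) \<noteq> 0"
proof (induction A rule: finite_induct)
  case empty
  then show ?case by (simp add: gone_def)
next
  case (insert c A)
  have "((UNIV :: bool set) \<times> {c}) \<inter> (UNIV \<times> A) = {}"
    using insert by auto
  then have "gmul (cell_term c) (cell_monomial A) ((UNIV \<times> {c}) \<union> (UNIV \<times> A)) =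
      (-1) ^ inv_count ((UNIV :: bool set) \<times> {c}) (UNIV \<times> A) * cell_monomial A (UNIV \<times> A)"
    using insert(1) cell_term_coeff[of c]
    by (simp add: gmul_monomials_coeff[OF is_monomial_cell_term is_monomial_cell_monomial])
  moreover have "(UNIV :: bool set) \<times> insert c A = (UNIV \<times> {c}) \<union> (UNIV \<times> A)"
    by auto
  ultimately show ?case
    using insert by (simp add: cell_monomial_insert)
qed

lemma finitary_cell_monomial: "finite A \<Longrightarrow> finitary (cell_monomial A)"
  by (rule finitary_if_monomial[OF is_monomial_cell_monomial]) simp_all

lemma cell_monomial_singleton: "cell_monomial {c} = cell_term c"
  using cell_monomial_insert[of "{}" c]
  by (simp add: gmul_gone_right finitary_if_monomial[OF is_monomial_cell_term])

lemma gmul_cell_monomial: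
  "finite A \<Longrightarrow> finite B \<Longrightarrow>
    gmul (cell_monomial A) (cell_monomial B) = (if A \<inter> B = {} then cell_monomial (A \<union> B) else gzero)"
proof (induction A rule: finite_induct)
  case empty
  then show ?case by (simp add: gmul_gone_left finitary_cell_monomial)
next
  case (insert c A)
  have "gmul (cell_monomial (insert c A)) (cell_monomial B) =
      gmul (cell_term c) (gmul (cell_monomial A) (cell_monomial B))"
    using insert by (simp add: cell_monomial_insert gmul_assoc)
  also have "\<dots> = (if insert c A \<inter> B = {} then cell_monomial (insert c A \<union> B) else gzero)"
  proof (cases "A \<inter> B = {}")
    case False
    then show ?thesis using insert by auto
  next
    case True
    show ?thesis
    proof (cases "c \<in> B")
      case False
      then show ?thesis using insert True by (simp add: cell_monomial_insert)
    next
      case cB: True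
      then have "cell_monomial (A \<union> B) = gmul (cell_term c) (cell_monomial (A \<union> B - {c}))"
        using cell_monomial_insert[of "A \<union> B - {c}" c] insert by (simp add: insert_absorb)
      then have "gmul (cell_term c) (cell_monomial (A \<union> B)) = gzero"
        by (simp add: gmul_assoc[symmetric] cell_term_square)
      then show ?thesis using insert True cB by auto
    qed
  qed
  finally show ?case .
qed

lemma finite_cells [simp]: "finite (cells N k)"
  unfolding cells_def by simp

lemma card_cells: "card (cells N k) = k * (N - k)"
  unfolding cells_def by (simp add: card_cartesian_product)

lemma card_cells_eq_diff_square: "card (cells N k) = k * N - k\<^sup>2"
  unfolding card_cells by (simp add: power2_eq_square diff_mult_distrib2)

lemma top_set_eq: "top_set N k = UNIV \<times> cells N k"
  unfolding top_set_def cells_def by auto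

lemma gprod_list_cell_generators:
  "distinct cs \<Longrightarrow>
    gprod_list (concat (map (\<lambda>c. [psi (fst c) (snd c), psibar (fst c) (snd c)]) cs)) =
    cell_monomial (set cs)"
proof (induction cs)
  case Nil
  then show ?case by (simp add: gprod_list_def)
next
  case (Cons c cs)
  then show ?case
    by (simp add: gprod_list_def gmul_assoc[symmetric] cell_monomial_insert cell_term_def phi_term_def)
qed

lemma top_monomial_eq: "top_monomial N k = cell_monomial (cells N k)"
proof -
  define cs where "cs = concat (map (\<lambda>s. map (\<lambda>j. (j, s)) [1..<k+1]) [1..<N-k+1])"
  have "distinct (concat (map (\<lambda>s. map (\<lambda>j. (j, s)) js) ss))"
    if "distinct js" "distinct ss" for js ss :: "nat list"
    using that by (induction ss) (auto simp: distinct_map inj_on_def)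
  then have "distinct cs"
    unfolding cs_def by simp
  moreover have "set cs = cells N k"
  proof -
    have "(\<lambda>j. (j, s)) ` {1..k} = {1..k} \<times> {s}" for s :: nat
      by auto
    then show ?thesis
      unfolding cs_def cells_def by (simp del: upt_Suc add: atLeastLessThanSuc_atLeastAtMost) blast
  qed
  moreover have "concat (map (\<lambda>s. concat (map (\<lambda>j. [psi j s, psibar j s]) js)) ss) =
      concat (map (\<lambda>c. [psi (fst c) (snd c), psibar (fst c) (snd c)])
        (concat (map (\<lambda>s. map (\<lambda>j. (j, s)) js) ss)))" for js ss :: "nat list"
    by (induction ss) (simp_all add: map_concat comp_def)
  ultimately show ?thesis
    unfolding top_monomial_def by (simp add: cs_def gprod_list_cell_generators)
qed

definition balanced :: "gen set \<Rightarrow> bool" where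
  "balanced G \<longleftrightarrow> (\<forall>c. (False, c) \<in> G \<longleftrightarrow> (True, c) \<in> G)"

lemma balanced_cells: "balanced (UNIV \<times> A)"
  unfolding balanced_def by auto

lemma berezin_cell_monomial: "berezin N k (cell_monomial (cells N k)) = 1"
  unfolding berezin_def top_monomial_eq top_set_eq
  using cell_monomial_coeff_nonzero[of "cells N k"] by simp

lemma berezin_unbalanced: "is_monomial a G \<Longrightarrow> \<not> balanced G \<Longrightarrow> berezin N k a = 0"
  unfolding berezin_def top_set_eq is_monomial_def by (metis balanced_cells div_0)

lemma berezin_gsum: "finite A \<Longrightarrow> berezin N k (gsum f A) = (\<Sum>x\<in>A. berezin N k (f x))"
  unfolding berezin_def gsum_def by (simp add: sum_divide_distrib)

lemma berezin_gscale: "berezin N k (gscale c a) = c * berezin N k a"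
  unfolding berezin_def gscale_def by simp

lemma berezin_zero [simp]: "berezin N k gzero = 0"
  unfolding berezin_def by simp

lemma trPhi_eq: "trPhi N k = gsum cell_term (cells N k)"
  unfolding trPhi_def Phi_def cells_def gsum_def cell_term_def phi_term_def
  by (rule ext) (simp add: sum.cartesian_product case_prod_beta)

definition trace_integral :: "nat \<Rightarrow> nat \<Rightarrow> nat \<Rightarrow> gen grass \<Rightarrow> real" where
  "trace_integral N k r a = berezin N k (gmul (gpow (trPhi N k) r) a)"

lemma trace_integral_gsum:
  "finite A \<Longrightarrow> trace_integral N k r (gsum f A) = (\<Sum>x\<in>A. trace_integral N k r (f x))"
  unfolding trace_integral_def gmul_gsum_right by (simp add: berezin_gsum)

lemma trace_integral_gscale: "trace_integral N k r (gscale c a) = c * trace_integral N k r a"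
  unfolding trace_integral_def gmul_gscale_right by (simp add: berezin_gscale)

lemma trace_integral_zero [simp]: "trace_integral N k r gzero = 0"
  unfolding trace_integral_def by simp

lemma trace_integral_Suc:
  "trace_integral N k (Suc r) a = (\<Sum>c\<in>cells N k. trace_integral N k r (gmul (cell_term c) a))"
proof -
  have "finitary (trPhi N k)"
    unfolding trPhi_eq cell_term_def phi_term_def by (intro finitary_gsum finitary_gmul)
  then have "trace_integral N k (Suc r) a = trace_integral N k r (gmul (trPhi N k) a)"
    unfolding trace_integral_def by (simp add: gpow_commute gmul_assoc)
  then show ?thesis
    unfolding trPhi_eq gmul_gsum_left by (simp add: trace_integral_gsum)
qed

lemma trace_integral_unbalanced:
  "is_monomial a G \<Longrightarrow> finite G \<Longrightarrow> \<not> balanced G \<Longrightarrow> trace_integral N k r a = 0"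
proof (induction r arbitrary: a G)
  case 0
  then show ?case
    unfolding trace_integral_def
    by (simp add: gmul_gone_left finitary_if_monomial berezin_unbalanced)
next
  case (Suc r)
  have "trace_integral N k r (gmul (cell_term c) a) = 0" for c
  proof (cases "(UNIV \<times> {c}) \<inter> G = {}")
    case True
    then have "\<not> balanced ((UNIV \<times> {c}) \<union> G)"
      using Suc.prems(3) unfolding balanced_def by auto
    moreover have "is_monomial (gmul (cell_term c) a) ((UNIV \<times> {c}) \<union> G)"
      using Suc.prems by (intro is_monomial_gmul is_monomial_cell_term) simp_all
    ultimately show ?thesis
      using Suc.prems(2) by (intro Suc.IH) simp_all
  next
    case False
    then have "gmul (cell_term c) a = gzero"
      using Suc.prems by (intro gmul_monomials_overlap[OF is_monomial_cell_term]) simp_all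
    then show ?thesis by simp
  qed
  then show ?case
    unfolding trace_integral_Suc by simp
qed

lemma trace_integral_gmul_unbalanced:
  assumes "is_monomial a G" "is_monomial b H" "finite G" "finite H"
    and "G \<inter> H = {} \<Longrightarrow> \<not> balanced (G \<union> H)"
  shows "trace_integral N k r (gmul a b) = 0"
proof (cases "G \<inter> H = {}")
  case True
  with assms show ?thesis
    by (intro trace_integral_unbalanced[OF is_monomial_gmul]) simp_all
next
  case False
  with assms show ?thesis
    by (simp add: gmul_monomials_overlap)
qed

lemma trace_integral_cell_monomial:
  "B \<subseteq> cells N k \<Longrightarrow> card B + r = card (cells N k) \<Longrightarrow> trace_integral N k r (cell_monomial B) = fact r"
proof (induction r arbitrary: B)
  case 0
  then have "B = cells N k"
    by (simp add: card_subset_eq)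
  then show ?case
    unfolding trace_integral_def
    by (simp add: berezin_cell_monomial gmul_gone_left finitary_cell_monomial)
next
  case (Suc r)
  have fin: "finite B"
    using Suc.prems(1) finite_cells by (rule finite_subset)
  have "trace_integral N k r (gmul (cell_term c) (cell_monomial B)) = (if c \<in> B then 0 else fact r)"
    if "c \<in> cells N k" for c
  proof (cases "c \<in> B")
    case True
    then have "gmul (cell_term c) (cell_monomial B) = gzero"
      using gmul_cell_monomial[of "{c}" B] fin by (auto simp: cell_monomial_singleton)
    with True show ?thesis by simp
  next
    case False
    then have "trace_integral N k r (cell_monomial (insert c B)) = fact r"
      using Suc that fin by (intro Suc.IH) auto
    with False fin show ?thesis
      by (simp add: cell_monomial_insert)
  qed
  then have "trace_integral N k (Suc r) (cell_monomial B) = (\<Sum>c\<in>cells N k - B. fact r)"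
    unfolding trace_integral_Suc by (simp add: sum.If_cases Diff_eq)
  also have "\<dots> = card (cells N k - B) * fact r"
    by simp
  also have "card (cells N k - B) = Suc r"
    using Suc.prems fin by (simp add: card_Diff_subset)
  finally show ?case
    by (simp add: algebra_simps)
qed

section \<open>The terms of tr \<open>\<Phi>\<^sup>2\<close>\<close>

definition tr2_term :: "nat \<times> nat \<Rightarrow> nat \<times> nat \<Rightarrow> gen grass" where
  "tr2_term c d = gmul (phi_term (fst c) (fst d) (snd c)) (phi_term (fst d) (fst c) (snd d))"

definition tr2_support :: "nat \<times> nat \<Rightarrow> nat \<times> nat \<Rightarrow> gen set" where
  "tr2_support c d =
    {(False, fst c, snd c), (True, fst d, snd c), (False, fst d, snd d), (True, fst c, snd d)}"

definition tr2_coeff :: "nat \<times> nat \<Rightarrow> nat \<times> nat \<Rightarrow> real" where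
  "tr2_coeff c d = of_bool (fst c = fst d) - of_bool (snd c = snd d)"

definition opposite_corners :: "nat \<times> nat \<Rightarrow> nat \<times> nat \<Rightarrow> bool" where
  "opposite_corners c d \<longleftrightarrow> fst c \<noteq> fst d \<and> snd c \<noteq> snd d"

lemma tr2_coeff_same_cell [simp]: "tr2_coeff c c = 0"
  unfolding tr2_coeff_def by simp

lemma sum_regroup_pairs:
  "(\<Sum>p\<in>A \<times> A. \<Sum>t\<in>B. \<Sum>s\<in>B. f (fst p) s (snd p) t) =
    (\<Sum>c\<in>A \<times> B. \<Sum>d\<in>A \<times> B. f (fst c) (snd c) (fst d) (snd d))"
proof -
  have "(\<Sum>p\<in>A \<times> A. \<Sum>t\<in>B. \<Sum>s\<in>B. f (fst p) s (snd p) t) =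
      (\<Sum>i\<in>A. \<Sum>j\<in>A. \<Sum>t\<in>B. \<Sum>s\<in>B. f i s j t)"
    by (simp add: sum.cartesian_product')
  also have "\<dots> = (\<Sum>i\<in>A. \<Sum>j\<in>A. \<Sum>s\<in>B. \<Sum>t\<in>B. f i s j t)"
    by (rule sum.cong[OF refl], rule sum.cong[OF refl], rule sum.swap)
  also have "\<dots> = (\<Sum>i\<in>A. \<Sum>s\<in>B. \<Sum>j\<in>A. \<Sum>t\<in>B. f i s j t)"
    by (rule sum.cong[OF refl], rule sum.swap)
  also have "\<dots> = (\<Sum>c\<in>A \<times> B. \<Sum>d\<in>A \<times> B. f (fst c) (snd c) (fst d) (snd d))"
    by (simp add: sum.cartesian_product')
  finally show ?thesis .
qed

lemma trPhi2_eq: "trPhi2 N k = gsum (\<lambda>c. gsum (tr2_term c) (cells N k)) (cells N k)"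
proof -
  have "trPhi2 N k = gsum (\<lambda>(i, j). gsum (\<lambda>t. gsum (\<lambda>s. gmul (phi_term i j s) (phi_term j i t))
      {1..N-k}) {1..N-k}) ({1..k} \<times> {1..k})"
    unfolding trPhi2_def Phi_def phi_term_def[symmetric] gmul_gsum_left gmul_gsum_right ..
  also have "\<dots> = gsum (\<lambda>c. gsum (tr2_term c) (cells N k)) (cells N k)"
  proof
    fix S
    show "gsum (\<lambda>(i, j). gsum (\<lambda>t. gsum (\<lambda>s. gmul (phi_term i j s) (phi_term j i t))
        {1..N-k}) {1..N-k}) ({1..k} \<times> {1..k}) S = gsum (\<lambda>c. gsum (tr2_term c) (cells N k)) (cells N k) S"
      using sum_regroup_pairs[of "\<lambda>i s j t. gmul (phi_term i j s) (phi_term j i t) S"]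
      unfolding gsum_def tr2_term_def cells_def by (simp only: case_prod_beta)
  qed
  finally show ?thesis .
qed

lemma finitary_trPhi2: "finitary (trPhi2 N k)"
  unfolding trPhi2_def by (intro finitary_gsum) (simp add: case_prod_beta finitary_gmul)

lemma is_monomial_tr2_term: "is_monomial (tr2_term c d) (tr2_support c d)"
proof -
  have "tr2_support c d =
      {(False, fst c, snd c), (True, fst d, snd c)} \<union> {(False, fst d, snd d), (True, fst c, snd d)}"
    unfolding tr2_support_def by auto
  then show ?thesis
    unfolding tr2_term_def
    by (metis finite.emptyI finite.insertI is_monomial_gmul is_monomial_phi_term)
qed

lemma finite_tr2_support [simp]: "finite (tr2_support c d)"
  unfolding tr2_support_def by simp

lemma tr2_term_same_cell: "tr2_term c c = gzero"
  unfolding tr2_term_def by (rule gmul_monomials_overlap[OF is_monomial_phi_term is_monomial_phi_term]) auto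

lemma tr2_term_same_row:
  assumes "fst c = fst d" "c \<noteq> d"
  shows "tr2_term c d = cell_monomial {c, d}"
proof -
  have "tr2_term c d = gmul (cell_monomial {c}) (cell_monomial {d})"
    using assms(1) by (simp add: tr2_term_def cell_term_def cell_monomial_singleton)
  with assms(2) show ?thesis
    by (simp add: gmul_cell_monomial insert_commute)
qed

lemma tr2_term_same_column:
  assumes "snd c = snd d" "fst c \<noteq> fst d"
  shows "tr2_term c d = gscale (-1) (cell_monomial {c, d})"
proof -
  obtain i j s where c: "c = (i, s)" and d: "d = (j, s)"
    using assms(1) by (metis prod.collapse)
  have "tr2_term c d = gmul (psi i s) (gmul (gmul (psibar j s) (psi j s)) (psibar i s))"
    unfolding tr2_term_def phi_term_def c d by (simp add: gmul_assoc)
  also have "gmul (psibar j s) (psi j s) = gscale (-1) (cell_term d)"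
    unfolding psi_def psibar_def d cell_term_def phi_term_def
    by (simp add: ggen_anticommute[of "(True, j, s)" "(False, j, s)"])
  also have "gmul (gscale (-1) (cell_term d)) (psibar i s) = gscale (-1) (gmul (psibar i s) (cell_term d))"
    using gmul_commute_monomials[OF is_monomial_cell_term is_monomial_psibar, of d i s]
    by (simp add: gmul_gscale_left card_cartesian_product)
  also have "gmul (psi i s) (gscale (-1) (gmul (psibar i s) (cell_term d))) =
      gscale (-1) (gmul (cell_monomial {c}) (cell_monomial {d}))"
    unfolding c cell_monomial_singleton by (simp add: gmul_gscale_right gmul_assoc cell_term_def phi_term_def)
  finally show ?thesis
    using assms(2) c d by (simp add: gmul_cell_monomial insert_commute)
qed

lemma tr2_term_not_opposite:
  assumes "\<not> opposite_corners c d"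
  shows "tr2_term c d = gscale (tr2_coeff c d) (cell_monomial {c, d})"
proof (cases "c = d")
  case True
  then show ?thesis by (simp add: tr2_term_same_cell)
next
  case False
  with assms consider "fst c = fst d" "snd c \<noteq> snd d" | "snd c = snd d" "fst c \<noteq> fst d"
    unfolding opposite_corners_def by (auto simp: prod_eq_iff)
  then show ?thesis
    by cases (simp_all add: tr2_coeff_def tr2_term_same_row tr2_term_same_column False)
qed

text \<open>The \<open>psi\<close> at \<open>c\<close> has no \<open>psibar\<close> partner inside \<open>tr2_support c d\<close>; a balanced \<open>G\<close>
  supplying it would also contain that \<open>psi\<close>.\<close>
lemma not_balanced_tr2_support_Un:
  assumes "opposite_corners c d" "balanced G" "tr2_support c d \<inter> G = {}"
  shows "\<not> balanced (tr2_support c d \<union> G)"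
proof
  assume "balanced (tr2_support c d \<union> G)"
  moreover have "(False, c) \<in> tr2_support c d"
    unfolding tr2_support_def by simp
  ultimately have "(True, c) \<in> tr2_support c d \<union> G"
    unfolding balanced_def by blast
  moreover have "(True, c) \<notin> tr2_support c d"
    using assms(1) unfolding tr2_support_def opposite_corners_def by (auto simp: prod_eq_iff)
  ultimately have "(False, c) \<in> G"
    using assms(2) unfolding balanced_def by blast
  with assms(3) show False
    unfolding tr2_support_def by auto
qed

lemma trace_integral_tr2_term:
  assumes "c \<in> cells N k" "d \<in> cells N k" "card (cells N k) = r + 2"
  shows "trace_integral N k r (tr2_term c d) = tr2_coeff c d * fact r"
proof (cases "opposite_corners c d")
  case True
  then have "\<not> balanced (tr2_support c d)"
    using not_balanced_tr2_support_Un[of c d "{}"] by (simp add: balanced_def)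
  with True show ?thesis
    by (simp add: trace_integral_unbalanced[OF is_monomial_tr2_term] tr2_coeff_def opposite_corners_def)
next
  case False
  show ?thesis
  proof (cases "c = d")
    case True
    then show ?thesis by (simp add: tr2_term_same_cell)
  next
    case cd: False
    have "trace_integral N k r (cell_monomial {c, d}) = fact r"
      using assms cd by (intro trace_integral_cell_monomial) auto
    with False show ?thesis
      by (simp add: tr2_term_not_opposite trace_integral_gscale)
  qed
qed

lemma tr2_coeff_commute: "tr2_coeff c d = tr2_coeff d c"
  unfolding tr2_coeff_def by auto

lemma sum_same_row:
  assumes "finite A" "finite B" "c \<in> A \<times> B"
  shows "(\<Sum>d\<in>A \<times> B. of_bool (fst c = fst d) :: real) = card B"
proof -
  have "(A \<times> B) \<inter> {d. fst c = fst d} = {fst c} \<times> B"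
    using assms(3) by auto
  with assms(1,2) show ?thesis
    by (simp add: card_cartesian_product)
qed

lemma sum_same_column:
  assumes "finite A" "finite B" "c \<in> A \<times> B"
  shows "(\<Sum>d\<in>A \<times> B. of_bool (snd c = snd d) :: real) = card A"
proof -
  have "(A \<times> B) \<inter> {d. snd c = snd d} = A \<times> {snd c}"
    using assms(3) by auto
  with assms(1,2) show ?thesis
    by (simp add: card_cartesian_product)
qed

lemma sum_same_cell: "finite S \<Longrightarrow> c \<in> S \<Longrightarrow> (\<Sum>d\<in>S. of_bool (c = d) :: real) = 1"
  by (simp add: of_bool_def)

lemma sum_tr2_coeff:
  "finite A \<Longrightarrow> finite B \<Longrightarrow> c \<in> A \<times> B \<Longrightarrow>
    (\<Sum>d\<in>A \<times> B. tr2_coeff c d) = real (card B) - real (card A)"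
  unfolding tr2_coeff_def by (simp add: sum_subtractf sum_same_row sum_same_column del: sum_of_bool_eq)

lemma sum_tr2_coeff_left:
  "finite A \<Longrightarrow> finite B \<Longrightarrow> c \<in> A \<times> B \<Longrightarrow>
    (\<Sum>d\<in>A \<times> B. tr2_coeff d c) = real (card B) - real (card A)"
  using sum_tr2_coeff[of A B c] by (simp add: tr2_coeff_commute)

lemma sum_tr2_coeff_square:
  assumes "finite A" "finite B" "c \<in> A \<times> B"
  shows "(\<Sum>d\<in>A \<times> B. (tr2_coeff c d)\<^sup>2) = real (card B) + real (card A) - 2"
proof -
  have "(tr2_coeff c d)\<^sup>2 = of_bool (fst c = fst d) + of_bool (snd c = snd d) - 2 * of_bool (c = d)" for d
    unfolding tr2_coeff_def by (auto simp: prod_eq_iff power2_eq_square)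
  then have "(\<Sum>d\<in>A \<times> B. (tr2_coeff c d)\<^sup>2) = (\<Sum>d\<in>A \<times> B.
      of_bool (fst c = fst d) + of_bool (snd c = snd d) - 2 * of_bool (c = d))"
    by (rule sum.cong[OF refl])
  with assms show ?thesis
    by (simp add: sum.distrib sum_subtractf sum_same_row sum_same_column sum_same_cell
        sum_distrib_left[symmetric] del: sum_of_bool_eq)
qed

lemma sum_opposite_corners:
  assumes "finite A" "finite B" "c \<in> A \<times> B"
  shows "(\<Sum>d\<in>A \<times> B. of_bool (opposite_corners c d) :: real) =
    (real (card A) - 1) * (real (card B) - 1)"
proof -
  have "(of_bool (opposite_corners c d) :: real) =
      1 - of_bool (fst c = fst d) - of_bool (snd c = snd d) + of_bool (c = d)" for d
    unfolding opposite_corners_def by (auto simp: prod_eq_iff)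
  then have "(\<Sum>d\<in>A \<times> B. of_bool (opposite_corners c d) :: real) = (\<Sum>d\<in>A \<times> B.
      1 - of_bool (fst c = fst d) - of_bool (snd c = snd d) + of_bool (c = d))"
    by (rule sum.cong[OF refl])
  with assms show ?thesis
    by (simp add: sum.distrib sum_subtractf sum_same_row sum_same_column sum_same_cell
        card_cartesian_product algebra_simps del: sum_of_bool_eq)
qed

lemma trace_integral_trPhi2:
  assumes "card (cells N k) = r + 2"
  shows "trace_integral N k r (trPhi2 N k) = fact r * card (cells N k) * (real (N - k) - real k)"
proof -
  have "trace_integral N k r (trPhi2 N k) = (\<Sum>c\<in>cells N k. \<Sum>d\<in>cells N k. tr2_coeff c d * fact r)"
    unfolding trPhi2_eq using assms by (simp add: trace_integral_gsum trace_integral_tr2_term)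
  also have "\<dots> = (\<Sum>c\<in>cells N k. fact r * (real (N - k) - real k))"
  proof (rule sum.cong[OF refl])
    fix c assume "c \<in> cells N k"
    then show "(\<Sum>d\<in>cells N k. tr2_coeff c d * fact r) = fact r * (real (N - k) - real k)"
      unfolding sum_distrib_right[symmetric] cells_def by (simp add: sum_tr2_coeff)
  qed
  finally show ?thesis
    by simp
qed

lemma P_1_eq:
  assumes "k \<le> N" "k * N - k\<^sup>2 \<ge> 2"
  shows "P N k 1 = fact (k * N - k\<^sup>2 - 2) * real k * (real N - real k) * (real N - 2 * real k)"
proof -
  define r where "r = k * N - k\<^sup>2 - 2"
  have card: "card (cells N k) = r + 2"
    using assms(2) unfolding r_def card_cells_eq_diff_square by simp
  have "P N k 1 = trace_integral N k r (trPhi2 N k)"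
    unfolding P_def trace_integral_def r_def by (simp add: gmul_gone_right finitary_trPhi2)
  also have "\<dots> = fact r * real k * (real N - real k) * (real N - 2 * real k)"
    using assms(1) by (simp add: trace_integral_trPhi2[OF card] card_cells of_nat_diff algebra_simps)
  finally show ?thesis
    unfolding r_def .
qed

section \<open>Products of two terms of tr \<open>\<Phi>\<^sup>2\<close>\<close>

definition other_corners :: "nat \<times> nat \<Rightarrow> nat \<times> nat \<Rightarrow> ((nat \<times> nat) \<times> (nat \<times> nat)) set" where
  "other_corners c d = {((fst d, snd c), (fst c, snd d)), ((fst c, snd d), (fst d, snd c))}"

definition tr2_product_weight :: "nat \<times> nat \<Rightarrow> nat \<times> nat \<Rightarrow> nat \<times> nat \<Rightarrow> nat \<times> nat \<Rightarrow> real" where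
  "tr2_product_weight c1 c2 c3 c4 =
    tr2_coeff c1 c2 * tr2_coeff c3 c4 * of_bool ({c1, c2} \<inter> {c3, c4} = {}) +
    of_bool (opposite_corners c1 c2 \<and> (c3, c4) \<in> other_corners c1 c2)"

lemma psi_in_tr2_support: "(False, e) \<in> tr2_support c d \<longleftrightarrow> e = c \<or> e = d"
  unfolding tr2_support_def by auto

lemma psibar_in_tr2_support: "(True, e) \<in> tr2_support c d \<longleftrightarrow> e = (fst d, snd c) \<or> e = (fst c, snd d)"
  unfolding tr2_support_def by auto

lemma opposite_other_corners:
  "opposite_corners c d \<Longrightarrow> (c', d') \<in> other_corners c d \<Longrightarrow> opposite_corners c' d'"
  unfolding opposite_corners_def other_corners_def by auto

lemma card_rectangle:
  "opposite_corners c d \<Longrightarrow> card {c, d, (fst d, snd c), (fst c, snd d)} = 4"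
  unfolding opposite_corners_def by (cases c, cases d) auto

lemma gmul_exchange_middle:
  "gmul b c = gmul c b \<Longrightarrow> gmul (gmul a b) (gmul c d) = gmul (gmul a c) (gmul b d)"
  by (metis gmul_assoc)

lemma gmul_tr2_term_other_corners:
  assumes "opposite_corners c d" "(c', d') \<in> other_corners c d"
  shows "gmul (tr2_term c d) (tr2_term c' d') = cell_monomial {c, d, (fst d, snd c), (fst c, snd d)}"
proof -
  obtain i s j t where c: "c = (i, s)" and d: "d = (j, t)"
    by (metis prod.collapse)
  have ij: "i \<noteq> j" "s \<noteq> t"
    using assms(1) c d unfolding opposite_corners_def by auto
  have "tr2_term c' d' = gmul (phi_term j i s) (phi_term i j t)"
    using assms(2) c d phi_term_commute unfolding other_corners_def tr2_term_def by auto
  then have "gmul (tr2_term c d) (tr2_term c' d') =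
      gmul (tr2_term (i, s) (j, s)) (tr2_term (j, t) (i, t))"
    unfolding tr2_term_def c d by (simp add: gmul_exchange_middle phi_term_commute)
  also have "\<dots> = gmul (cell_monomial {(i, s), (j, s)}) (cell_monomial {(j, t), (i, t)})"
    using ij by (simp add: tr2_term_same_column gmul_gscale_left gmul_gscale_right)
  also have "\<dots> = cell_monomial {c, d, (fst d, snd c), (fst c, snd d)}"
    using ij c d by (simp add: gmul_cell_monomial insert_commute)
  finally show ?thesis .
qed

text \<open>Each \<open>psibar\<close> of \<open>tr2_support c1 c2\<close> sits on one of the two other corners of the rectangle,
  where only \<open>tr2_support c3 c4\<close> can supply the matching \<open>psi\<close>.\<close>
lemma balanced_tr2_supports_Un:
  assumes "opposite_corners c1 c2" "tr2_support c1 c2 \<inter> tr2_support c3 c4 = {}"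
    and "balanced (tr2_support c1 c2 \<union> tr2_support c3 c4)"
  shows "(c3, c4) \<in> other_corners c1 c2"
proof -
  have "e \<in> {c3, c4}" if "e = (fst c2, snd c1) \<or> e = (fst c1, snd c2)" for e
  proof -
    have "(False, e) \<in> tr2_support c1 c2 \<union> tr2_support c3 c4"
      using assms(3) that unfolding balanced_def by (auto simp: psibar_in_tr2_support)
    moreover have "e \<noteq> c1" "e \<noteq> c2"
      using assms(1) that unfolding opposite_corners_def by (auto simp: prod_eq_iff)
    ultimately show ?thesis
      by (auto simp: psi_in_tr2_support)
  qed
  moreover have "(fst c2, snd c1) \<noteq> (fst c1, snd c2)"
    using assms(1) unfolding opposite_corners_def by auto
  ultimately show ?thesis
    unfolding other_corners_def by auto
qed

lemma trace_integral_tr2_product_opposite: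
  assumes "opposite_corners c1 c2" "opposite_corners c3 c4"
    and "c1 \<in> cells N k" "c2 \<in> cells N k" "card (cells N k) = r + 4"
  shows "trace_integral N k r (gmul (tr2_term c1 c2) (tr2_term c3 c4)) =
    fact r * of_bool ((c3, c4) \<in> other_corners c1 c2)"
proof (cases "(c3, c4) \<in> other_corners c1 c2")
  case True
  have "{c1, c2, (fst c2, snd c1), (fst c1, snd c2)} \<subseteq> cells N k"
    using assms(3,4) unfolding cells_def by auto
  with True assms(1,5) show ?thesis
    by (simp add: gmul_tr2_term_other_corners trace_integral_cell_monomial card_rectangle)
next
  case False
  then have "tr2_support c1 c2 \<inter> tr2_support c3 c4 = {} \<Longrightarrow>
      \<not> balanced (tr2_support c1 c2 \<union> tr2_support c3 c4)"
    using balanced_tr2_supports_Un[OF assms(1)] by blast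
  then have "trace_integral N k r (gmul (tr2_term c1 c2) (tr2_term c3 c4)) = 0"
    by (intro trace_integral_gmul_unbalanced[OF is_monomial_tr2_term is_monomial_tr2_term]) simp_all
  with False show ?thesis
    by simp
qed

lemma trace_integral_tr2_product_mixed:
  assumes "opposite_corners c d" "\<not> opposite_corners c' d'"
  shows "trace_integral N k r (gmul (tr2_term c d) (tr2_term c' d')) = 0"
    and "trace_integral N k r (gmul (tr2_term c' d') (tr2_term c d)) = 0"
proof -
  have mono: "is_monomial (tr2_term c' d') (UNIV \<times> {c', d'})"
    unfolding tr2_term_not_opposite[OF assms(2)]
    by (intro is_monomial_gscale is_monomial_cell_monomial) simp
  show "trace_integral N k r (gmul (tr2_term c d) (tr2_term c' d')) = 0"
    using not_balanced_tr2_support_Un[OF assms(1) balanced_cells]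
    by (intro trace_integral_gmul_unbalanced[OF is_monomial_tr2_term mono]) simp_all
  show "trace_integral N k r (gmul (tr2_term c' d') (tr2_term c d)) = 0"
    using not_balanced_tr2_support_Un[OF assms(1) balanced_cells]
    by (intro trace_integral_gmul_unbalanced[OF mono is_monomial_tr2_term]) (simp_all add: Int_commute Un_commute)
qed

lemma trace_integral_tr2_product_not_opposite:
  assumes "\<not> opposite_corners c1 c2" "\<not> opposite_corners c3 c4"
    and "{c1, c2, c3, c4} \<subseteq> cells N k" "card (cells N k) = r + 4"
  shows "trace_integral N k r (gmul (tr2_term c1 c2) (tr2_term c3 c4)) =
    fact r * tr2_coeff c1 c2 * tr2_coeff c3 c4 * of_bool ({c1, c2} \<inter> {c3, c4} = {})"
proof -
  have product: "gmul (tr2_term c1 c2) (tr2_term c3 c4) = gscale (tr2_coeff c1 c2 * tr2_coeff c3 c4)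
      (if {c1, c2} \<inter> {c3, c4} = {} then cell_monomial ({c1, c2} \<union> {c3, c4}) else gzero)"
    using assms(1,2)
    by (simp add: tr2_term_not_opposite gmul_gscale_left gmul_gscale_right gmul_cell_monomial mult.commute
        del: Un_insert_left Un_insert_right)
  show ?thesis
  proof (cases "c1 \<noteq> c2 \<and> c3 \<noteq> c4 \<and> {c1, c2} \<inter> {c3, c4} = {}")
    case True
    then have "card ({c1, c2} \<union> {c3, c4}) = 4"
      by auto
    with True assms(3,4) show ?thesis
      by (simp add: product trace_integral_gscale trace_integral_cell_monomial)
  next
    case False
    then consider "c1 = c2" | "c3 = c4" | "{c1, c2} \<inter> {c3, c4} \<noteq> {}"
      by blast
    then show ?thesis
      unfolding product by cases auto
  qed
qed

lemma trace_integral_tr2_product: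
  assumes "{c1, c2, c3, c4} \<subseteq> cells N k" "card (cells N k) = r + 4"
  shows "trace_integral N k r (gmul (tr2_term c1 c2) (tr2_term c3 c4)) = fact r * tr2_product_weight c1 c2 c3 c4"
proof -
  have coeff: "opposite_corners c d \<Longrightarrow> tr2_coeff c d = 0" for c d
    unfolding opposite_corners_def tr2_coeff_def by simp
  consider "opposite_corners c1 c2" "opposite_corners c3 c4"
    | "opposite_corners c1 c2" "\<not> opposite_corners c3 c4"
    | "\<not> opposite_corners c1 c2" "opposite_corners c3 c4"
    | "\<not> opposite_corners c1 c2" "\<not> opposite_corners c3 c4"
    by blast
  then show ?thesis
  proof cases
    case 1
    with assms show ?thesis
      by (simp add: trace_integral_tr2_product_opposite tr2_product_weight_def coeff)
  next
    case 2
    then have "(c3, c4) \<notin> other_corners c1 c2"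
      using opposite_other_corners by blast
    with 2 show ?thesis
      by (simp add: trace_integral_tr2_product_mixed tr2_product_weight_def coeff)
  next
    case 3
    then show ?thesis
      by (simp add: trace_integral_tr2_product_mixed tr2_product_weight_def coeff)
  next
    case 4
    with assms show ?thesis
      by (simp add: trace_integral_tr2_product_not_opposite tr2_product_weight_def)
  qed
qed

lemma sum_tr2_coeff_disjoint:
  assumes "finite A" "finite B" "c1 \<in> A \<times> B" "c2 \<in> A \<times> B" "c1 \<noteq> c2"
  shows "(\<Sum>c3\<in>A \<times> B. \<Sum>c4\<in>A \<times> B. tr2_coeff c3 c4 * of_bool ({c1, c2} \<inter> {c3, c4} = {})) =
    (real (card (A \<times> B)) - 4) * (real (card B) - real (card A)) + 2 * tr2_coeff c1 c2"
proof -
  define C where "C = A \<times> B"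
  define e where "e = real (card B) - real (card A)"
  have C: "finite C" "{c1, c2} \<subseteq> C"
    using assms unfolding C_def by auto
  have row: "(\<Sum>d\<in>C - {c1, c2}. tr2_coeff c d) = e - tr2_coeff c c1 - tr2_coeff c c2" if "c \<in> C" for c
    using that C assms(1,2,5) unfolding C_def e_def by (simp add: sum_diff sum_tr2_coeff)
  have "(\<Sum>c3\<in>C. \<Sum>c4\<in>C. tr2_coeff c3 c4 * of_bool ({c1, c2} \<inter> {c3, c4} = {})) =
      (\<Sum>c3\<in>C. of_bool (c3 \<notin> {c1, c2}) * (\<Sum>c4\<in>C. tr2_coeff c3 c4 * of_bool (c4 \<notin> {c1, c2})))"
    by (intro sum.cong refl) (auto simp: sum_distrib_left)
  also have "\<dots> = (\<Sum>c3\<in>C - {c1, c2}. \<Sum>c4\<in>C - {c1, c2}. tr2_coeff c3 c4)"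
  proof -
    have "C \<inter> {x. x \<notin> {c1, c2}} = C - {c1, c2}"
      by auto
    with C(1) show ?thesis
      by (simp only: sum_mult_of_bool_eq sum_of_bool_mult_eq)
  qed
  also have "\<dots> = (\<Sum>c3\<in>C - {c1, c2}. e - tr2_coeff c3 c1 - tr2_coeff c3 c2)"
    using row by simp
  also have "\<dots> = (\<Sum>c3\<in>C. e - tr2_coeff c3 c1 - tr2_coeff c3 c2) - (e - tr2_coeff c2 c1) - (e - tr2_coeff c1 c2)"
    using C assms(5) by (simp add: sum_diff)
  also have "(\<Sum>c3\<in>C. e - tr2_coeff c3 c1 - tr2_coeff c3 c2) = card C * e - e - e"
    using C assms unfolding C_def e_def by (simp add: sum_subtractf sum_tr2_coeff_left)
  finally show ?thesis
    unfolding C_def e_def by (simp add: tr2_coeff_commute[of c2 c1] algebra_simps)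
qed

lemma sum_other_corners:
  assumes "c1 \<in> A \<times> B" "c2 \<in> A \<times> B" "finite A" "finite B"
  shows "(\<Sum>c3\<in>A \<times> B. \<Sum>c4\<in>A \<times> B. of_bool (opposite_corners c1 c2 \<and> (c3, c4) \<in> other_corners c1 c2)) =
    (2 * of_bool (opposite_corners c1 c2) :: real)"
proof -
  have "(\<Sum>c3\<in>A \<times> B. \<Sum>c4\<in>A \<times> B. of_bool (opposite_corners c1 c2 \<and> (c3, c4) \<in> other_corners c1 c2)) =
      (\<Sum>p\<in>(A \<times> B) \<times> (A \<times> B). of_bool (opposite_corners c1 c2 \<and> p \<in> other_corners c1 c2) :: real)"
    by (simp add: sum.cartesian_product)
  also have "\<dots> = of_bool (opposite_corners c1 c2) * card (other_corners c1 c2)"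
  proof -
    have "other_corners c1 c2 \<subseteq> (A \<times> B) \<times> (A \<times> B)"
      using assms(1,2) unfolding other_corners_def by auto
    then show ?thesis
      using assms(3,4) by (simp add: Int_absorb1 Int_def[symmetric])
  qed
  also have "opposite_corners c1 c2 \<Longrightarrow> card (other_corners c1 c2) = 2"
    unfolding other_corners_def opposite_corners_def by (auto simp: prod_eq_iff)
  finally show ?thesis
    by (cases "opposite_corners c1 c2") auto
qed

lemma sum_tr2_product_weight:
  assumes "finite A" "finite B" "c1 \<in> A \<times> B" "c2 \<in> A \<times> B"
  shows "(\<Sum>c3\<in>A \<times> B. \<Sum>c4\<in>A \<times> B. tr2_product_weight c1 c2 c3 c4) =
    tr2_coeff c1 c2 * ((real (card (A \<times> B)) - 4) * (real (card B) - real (card A)) + 2 * tr2_coeff c1 c2) +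
    2 * of_bool (opposite_corners c1 c2)"
proof (cases "c1 = c2")
  case True
  then show ?thesis
    by (simp add: tr2_product_weight_def opposite_corners_def)
next
  case False
  have "(\<Sum>c3\<in>A \<times> B. \<Sum>c4\<in>A \<times> B. tr2_product_weight c1 c2 c3 c4) =
      tr2_coeff c1 c2 * (\<Sum>c3\<in>A \<times> B. \<Sum>c4\<in>A \<times> B. tr2_coeff c3 c4 * of_bool ({c1, c2} \<inter> {c3, c4} = {})) +
      (\<Sum>c3\<in>A \<times> B. \<Sum>c4\<in>A \<times> B. of_bool (opposite_corners c1 c2 \<and> (c3, c4) \<in> other_corners c1 c2))"
    unfolding tr2_product_weight_def by (simp add: sum.distrib sum_distrib_left mult.assoc del: sum_mult_of_bool_eq)
  then show ?thesis
    unfolding sum_tr2_coeff_disjoint[OF assms False] sum_other_corners[OF assms(3,4,1,2)] .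
qed

lemma sum_sum_tr2_product_weight:
  assumes "finite A" "finite B" "c1 \<in> A \<times> B"
  shows "(\<Sum>c2\<in>A \<times> B. \<Sum>c3\<in>A \<times> B. \<Sum>c4\<in>A \<times> B. tr2_product_weight c1 c2 c3 c4) =
    (real (card (A \<times> B)) - 4) * (real (card B) - real (card A))\<^sup>2 +
    2 * (real (card B) + real (card A) - 2) + 2 * ((real (card A) - 1) * (real (card B) - 1))"
proof -
  define a where "a = (real (card (A \<times> B)) - 4) * (real (card B) - real (card A))"
  have "(\<Sum>c2\<in>A \<times> B. \<Sum>c3\<in>A \<times> B. \<Sum>c4\<in>A \<times> B. tr2_product_weight c1 c2 c3 c4) =
      (\<Sum>c2\<in>A \<times> B. a * tr2_coeff c1 c2 + 2 * (tr2_coeff c1 c2)\<^sup>2 + 2 * of_bool (opposite_corners c1 c2))"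
    using assms unfolding a_def
    by (intro sum.cong refl) (simp add: sum_tr2_product_weight algebra_simps power2_eq_square)
  also have "\<dots> = a * (real (card B) - real (card A)) +
      2 * (real (card B) + real (card A) - 2) + 2 * ((real (card A) - 1) * (real (card B) - 1))"
    using assms
    by (simp add: sum.distrib sum_distrib_left[symmetric] sum_tr2_coeff sum_tr2_coeff_square
        sum_opposite_corners del: sum_of_bool_eq)
  finally show ?thesis
    unfolding a_def by (simp add: power2_eq_square mult.assoc)
qed

lemma trace_integral_trPhi2_square:
  assumes "card (cells N k) = r + 4"
  shows "trace_integral N k r (gmul (trPhi2 N k) (trPhi2 N k)) =
    fact r * card (cells N k) * ((real (card (cells N k)) - 4) * (real (N - k) - real k)\<^sup>2 +
      2 * (real (N - k) + real k - 2) + 2 * ((real k - 1) * (real (N - k) - 1)))"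
proof -
  let ?C = "cells N k"
  have "trace_integral N k r (gmul (trPhi2 N k) (trPhi2 N k)) = (\<Sum>c1\<in>?C. \<Sum>c2\<in>?C. \<Sum>c3\<in>?C. \<Sum>c4\<in>?C.
      trace_integral N k r (gmul (tr2_term c1 c2) (tr2_term c3 c4)))"
    unfolding trPhi2_eq gmul_gsum_left unfolding gmul_gsum_right by (simp add: trace_integral_gsum)
  also have "\<dots> = (\<Sum>c1\<in>?C. fact r * (\<Sum>c2\<in>?C. \<Sum>c3\<in>?C. \<Sum>c4\<in>?C. tr2_product_weight c1 c2 c3 c4))"
    using assms by (simp add: trace_integral_tr2_product sum_distrib_left)
  also have "\<dots> = (\<Sum>c1\<in>?C. fact r * ((real (card ?C) - 4) * (real (N - k) - real k)\<^sup>2 +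
      2 * (real (N - k) + real k - 2) + 2 * ((real k - 1) * (real (N - k) - 1))))"
    unfolding cells_def by (intro sum.cong refl) (simp add: sum_sum_tr2_product_weight)
  finally show ?thesis
    by simp
qed

lemma P_2_eq:
  assumes "k \<le> N" "k * N - k\<^sup>2 \<ge> 4"
  shows "P N k 2 = fact (k * N - k\<^sup>2 - 4) * real k * (real N - real k) *
             (real k * (real N - real k) ^ 3 - 2 * (real N - real k)\<^sup>2 * ((real k)\<^sup>2 + 2)
              + (real N - real k) * ((real k) ^ 3 + 10 * real k) - 4 * (real k)\<^sup>2 - 2)"
proof -
  define r where "r = k * N - k\<^sup>2 - 4"
  have card: "card (cells N k) = r + 4"
    using assms(2) unfolding r_def card_cells_eq_diff_square by simp
  have "gpow (trPhi2 N k) 2 = gmul (trPhi2 N k) (trPhi2 N k)"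
    by (simp add: numeral_2_eq_2 gmul_gone_right finitary_trPhi2)
  then have "P N k 2 = trace_integral N k r (gmul (trPhi2 N k) (trPhi2 N k))"
    unfolding P_def trace_integral_def r_def by simp
  also have "\<dots> = fact r * real k * (real N - real k) *
             (real k * (real N - real k) ^ 3 - 2 * (real N - real k)\<^sup>2 * ((real k)\<^sup>2 + 2)
              + (real N - real k) * ((real k) ^ 3 + 10 * real k) - 4 * (real k)\<^sup>2 - 2)"
    using assms(1) unfolding trace_integral_trPhi2_square[OF card] card_cells
    by (simp add: of_nat_diff algebra_simps power2_eq_square power3_eq_cube)
  finally show ?thesis
    unfolding r_def .
qed

theorem proposition1:
  fixes N k :: nat
  assumes "1 \<le> k" and "k \<le> N"
  shows "(k * N - k\<^sup>2 \<ge> 2 \<longrightarrow>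
           P N k 1 = fact (k * N - k\<^sup>2 - 2) * real k * (real N - real k) * (real N - 2 * real k))
       \<and> (k * N - k\<^sup>2 \<ge> 4 \<longrightarrow>
           P N k 2 = fact (k * N - k\<^sup>2 - 4) * real k * (real N - real k) *
             (real k * (real N - real k) ^ 3 - 2 * (real N - real k)\<^sup>2 * ((real k)\<^sup>2 + 2)
              + (real N - real k) * ((real k) ^ 3 + 10 * real k) - 4 * (real k)\<^sup>2 - 2))"
  using P_1_eq[OF assms(2)] P_2_eq[OF assms(2)] by blast

end
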